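(* Let $n\ge1$, let $\alpha_0,\ldots,\alpha_{2n+1}\in\mathbb{C}$ with $\sum_{i=0}^{2n+1}\alpha_i=1$, and assume \[ \alpha_{2i}^{2j-1}\notin\mathbb{Z},\quad \sum_{i=0}^n\alpha_{2i+1}\notin\mathbb{Z},\quad \alpha_{2i-1}^{2j-1}\notin\mathbb{Z}\qquad(i=1,\ldots,n,\ j=1,\ldots,n-i+1). \] Consider the linear system \[ \frac{d\mathbf{x}}{dt}=\Big(\frac{A_0}{t}+\frac{A_1}{1-t}\Big)\mathbf{x},\qquad A_0=\sum_{i=0}^{n-1}\big(-\alpha_{2i+2}^{2n-2i-1}\big)E_{i,i}+\sum_{i=0}^{n-1}\sum_{j=i+1}^{n}\alpha_{2j+1}E_{i,j},\quad A_1=\sum_{i=0}^{n}\sum_{j=0}^{n}\alpha_{2j+1}E_{i,j}, \] for $\mathbf{x}={}^t(x_0,\ldots,x_n)$. For $k,l\in\{0,\ldots,n\}$ define \[ f^{k,l}=\prod_{i=1}^{l}\frac{\alpha_{2k-2i+3}^{2i-2}}{\alpha_{2k-2i+2}^{2i-1}}\cdot{}_{n+1}F_n\left[\begin{array}{c}a_0,\ldots,a_n\\ b_1,\ldots,b_n\end{array};t\right], \] where $a_0=\alpha_{2k-2n+1}^{2n}$; $a_i=1+\alpha_{2k-2i+3}^{2i-2}$, $b_i=1+\alpha_{2k-2i+2}^{2i-1}$ for $i=1,\ldots,l$; and $a_i=\alpha_{2k-2i+3}^{2i-2}$, $b_i=\alpha_{2k-2i+2}^{2i-1}$ for $i=l+1,\ldots,n$.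 Then on the domain $|t|<1$ the system admits the fundamental solutions $\mathbf{x}^{(k)}$, $k=0,\ldots,n$, given by \[ \mathbf{x}^{(k)}=t^{-\alpha_{2k+2}^{2n-2k-1}}\,{}^t\big(f^{k,k},f^{k,k-1},\ldots,f^{k,0},\,tf^{k,n},tf^{k,n-1},\ldots,tf^{k,k+1}\big), \] i.e. the $i$-th component is $t^{-\alpha_{2k+2}^{2n-2k-1}}f^{k,k-i}$ for $0\le i\le k$ and $t^{-\alpha_{2k+2}^{2n-2k-1}}\,t\,f^{k,n+k+1-i}$ for $k+1\le i\le n$.
   Context: Indices of the parameters $\alpha_i$ are taken modulo $2n+2$. For integers $k,l$, $\alpha_k^l=0$ if $l<0$ and $\alpha_k^l=\sum_{i=k}^{k+l}\alpha_i$ if $l\ge0$. $E_{i,j}=(\delta_{i,k}\delta_{j,l})_{k,l=0}^{n}$ is the $(n+1)\times(n+1)$ matrix unit. The generalized hypergeometric function is ${}_{n+1}F_n\left[\begin{array}{c}a_0,\ldots,a_n\\ b_1,\ldots,b_n\end{array};t\right]=\sum_{i=0}^\infty\frac{(a_0)_i\cdots(a_n)_i}{(1)_i(b_1)_i\cdots(b_n)_i}t^i$, with $(a)_i=a(a+1)\cdots(a+i-1)$. "Fundamental solutions" means these $n+1$ vector functions are solutions forming a fundamental system. *)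

theory Defs
  imports "HOL-Analysis.Analysis"
begin

text \<open>Parameters alpha_0..alpha_{2n+1} are given as a function on nat; indices are
  read modulo 2n+2.\<close>
definition alpha_ix :: "nat \<Rightarrow> (nat \<Rightarrow> complex) \<Rightarrow> int \<Rightarrow> complex" where
  "alpha_ix n \<alpha> k = \<alpha> (nat (k mod (2 * int n + 2)))"

definition alpha_sum :: "nat \<Rightarrow> (nat \<Rightarrow> complex) \<Rightarrow> int \<Rightarrow> int \<Rightarrow> complex" where
  "alpha_sum n \<alpha> k l = (if l < 0 then 0 else (\<Sum>m\<in>{k..k+l}. alpha_ix n \<alpha> m))"

definition hypF :: "nat \<Rightarrow> (nat \<Rightarrow> complex) \<Rightarrow> (nat \<Rightarrow> complex) \<Rightarrow> complex \<Rightarrow> complex" where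
  "hypF n a b t = (\<Sum>i. (\<Prod>j\<in>{0..n}. pochhammer (a j) i)
      / (fact i * (\<Prod>j\<in>{1..n}. pochhammer (b j) i)) * t ^ i)"

definition matA0 :: "nat \<Rightarrow> (nat \<Rightarrow> complex) \<Rightarrow> nat \<Rightarrow> nat \<Rightarrow> complex" where
  "matA0 n \<alpha> i j =
     (if i < n \<and> j = i then - alpha_sum n \<alpha> (2 * int i + 2) (2 * int n - 2 * int i - 1) else 0)
   + (if i < n \<and> i < j \<and> j \<le> n then alpha_ix n \<alpha> (2 * int j + 1) else 0)"

definition matA1 :: "nat \<Rightarrow> (nat \<Rightarrow> complex) \<Rightarrow> nat \<Rightarrow> nat \<Rightarrow> complex" where
  "matA1 n \<alpha> i j = (if i \<le> n \<and> j \<le> n then alpha_ix n \<alpha> (2 * int j + 1) else 0)"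

definition par_a :: "nat \<Rightarrow> (nat \<Rightarrow> complex) \<Rightarrow> nat \<Rightarrow> nat \<Rightarrow> nat \<Rightarrow> complex" where
  "par_a n \<alpha> k l i =
     (if i = 0 then alpha_sum n \<alpha> (2 * int k - 2 * int n + 1) (2 * int n)
      else if i \<le> l then 1 + alpha_sum n \<alpha> (2 * int k - 2 * int i + 3) (2 * int i - 2)
      else alpha_sum n \<alpha> (2 * int k - 2 * int i + 3) (2 * int i - 2))"

definition par_b :: "nat \<Rightarrow> (nat \<Rightarrow> complex) \<Rightarrow> nat \<Rightarrow> nat \<Rightarrow> nat \<Rightarrow> complex" where
  "par_b n \<alpha> k l i =
     (if i \<le> l then 1 + alpha_sum n \<alpha> (2 * int k - 2 * int i + 2) (2 * int i - 1)
      else alpha_sum n \<alpha> (2 * int k - 2 * int i + 2) (2 * int i - 1))"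

definition fkl :: "nat \<Rightarrow> (nat \<Rightarrow> complex) \<Rightarrow> nat \<Rightarrow> nat \<Rightarrow> complex \<Rightarrow> complex" where
  "fkl n \<alpha> k l t =
     (\<Prod>i\<in>{1..l}. alpha_sum n \<alpha> (2 * int k - 2 * int i + 3) (2 * int i - 2)
                 / alpha_sum n \<alpha> (2 * int k - 2 * int i + 2) (2 * int i - 1))
     * hypF n (par_a n \<alpha> k l) (par_b n \<alpha> k l) t"

definition solx :: "nat \<Rightarrow> (nat \<Rightarrow> complex) \<Rightarrow> nat \<Rightarrow> nat \<Rightarrow> complex \<Rightarrow> complex" where
  "solx n \<alpha> k i t =
     t powr (- alpha_sum n \<alpha> (2 * int k + 2) (2 * int n - 2 * int k - 1)) *
     (if i \<le> k then fkl n \<alpha> k (k - i) t else t * fkl n \<alpha> k (n + k + 1 - i) t)"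

text \<open>Domain: the unit disc slit along the non-positive real axis, where the
  principal branch of t^c is holomorphic.\<close>
definition slit_disc :: "complex set" where
  "slit_disc = {t. norm t < 1 \<and> \<not> (Im t = 0 \<and> Re t \<le> 0)}"

end

theory Submission
  imports Defs "HOL-Complex_Analysis.Conformal_Mappings"
begin

text \<open>Writing \<open>x\<^sup>(\<^sup>k\<^sup>) = t\<^sup>c G(t)\<close> with \<open>c = -\<alpha>\<^sub>2\<^sub>k\<^sub>+\<^sub>2\<^sup>2\<^sup>n\<^sup>-\<^sup>2\<^sup>k\<^sup>-\<^sup>1\<close>, the system
  \<open>t (1 - t) x' = (1 - t) A\<^sub>0 x + t A\<^sub>1 x\<close> becomes a recurrence for the Taylor coefficients of
  \<open>G\<close>. Its components are, up to the factor \<open>t\<close>, the series \<open>f\<^sup>k\<^sup>,\<^sup>l\<close>, and two neighbouring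
  components are linked by a contiguity relation between the hypergeometric coefficients; this
  relation telescopes along each row of \<open>A\<^sub>0\<close> and \<open>A\<^sub>1\<close>, which gives the recurrence. The series
  converge on the unit disc by the ratio test. The local exponents differ by non-integers, so
  continuing a vanishing combination of the \<open>x\<^sup>(\<^sup>k\<^sup>)\<close> around \<open>t = 0\<close> and solving a Vandermonde
  system separates the solutions, since the \<open>k\<close>-th component of \<open>x\<^sup>(\<^sup>k\<^sup>)\<close> is \<open>t\<^sup>c\<close> times a
  series with constant term \<open>1\<close>.\<close>

lemma sum_int_interval_eq_sum_lessThan:
  "(\<Sum>m\<in>{s..s + int len - 1}. f m) = (\<Sum>j<len. f (s + int j))"
proof (induction len)
  case (Suc len)
  have "{s..s + int (Suc len) - 1} = insert (s + int len) {s..s + int len - 1}" by auto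
  then show ?case using Suc by (simp add: add.commute)
qed simp

lemma distinct_power_sums_eq_0_imp_eq_0:
  fixes \<mu> w :: "'a \<Rightarrow> 'b::field"
  assumes "finite K" "inj_on \<mu> K" "\<And>m. (\<Sum>k\<in>K. \<mu> k ^ m * w k) = 0" "k \<in> K"
  shows "w k = 0"
  using assms
proof (induction K arbitrary: w k rule: finite_induct)
  case (insert a F)
  have ne: "\<mu> j \<noteq> \<mu> a" if "j \<in> F" for j
    using insert.prems(1) insert.hyps(2) that by (auto simp: inj_on_def)
  \<comment> \<open>Multiplying by \<open>\<mu> j - \<mu> a\<close> eliminates the term of \<open>a\<close>.\<close>
  define w' where "w' j = (\<mu> j - \<mu> a) * w j" for j
  have sums': "(\<Sum>j\<in>F. \<mu> j ^ m * w' j) = 0" for m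
  proof -
    have "(\<Sum>j\<in>F. \<mu> j ^ m * w' j)
        = (\<Sum>j\<in>insert a F. \<mu> j ^ Suc m * w j) - \<mu> a * (\<Sum>j\<in>insert a F. \<mu> j ^ m * w j)"
      using insert.hyps
      by (simp add: w'_def sum_distrib_left sum_subtractf[symmetric] algebra_simps)
    also have "\<dots> = 0"
      using insert.prems(2)[of "Suc m"] insert.prems(2)[of m] by (simp only: mult_zero_right diff_self)
    finally show ?thesis .
  qed
  have wF: "w j = 0" if "j \<in> F" for j
  proof -
    have "w' j = 0" using insert.IH[of w'] insert.prems(1) sums' that by auto
    then show ?thesis using ne[OF that] by (simp add: w'_def)
  qed
  have "w a + (\<Sum>j\<in>F. w j) = 0" using insert.prems(2)[of 0] insert.hyps by simp
  then show ?case using wF insert.prems(3) by auto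
qed simp

lemma tendsto_add_of_nat_ratio:
  "((\<lambda>m. (a + of_nat m) / (b + of_nat m)) \<longlongrightarrow> (1::'a::real_normed_field)) sequentially"
proof -
  have "((\<lambda>m. (a / of_nat m + 1) / (b / of_nat m + 1)) \<longlongrightarrow> (0 + 1) / (0 + 1)) sequentially"
    by (intro tendsto_intros lim_const_over_n) auto
  moreover have "eventually (\<lambda>m. (a / of_nat m + 1) / (b / of_nat m + 1)
                                 = (a + of_nat m) / (b + of_nat m)) sequentially"
    using eventually_gt_at_top[of 0]
  proof eventually_elim
    case (elim m)
    then have "(of_nat m :: 'a) \<noteq> 0" by simp
    then have "a / of_nat m + 1 = (a + of_nat m) / of_nat m" "b / of_nat m + 1 = (b + of_nat m) / of_nat m"
      by (simp_all add: field_simps)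
    then show ?case using \<open>(of_nat m :: 'a) \<noteq> 0\<close> by simp
  qed
  ultimately show ?thesis by (simp add: tendsto_cong)
qed

lemma conv_radius_ge_1_if_ratio_tendsto_1:
  fixes c \<rho> :: "nat \<Rightarrow> 'a::{banach, real_normed_div_algebra}"
  assumes rec: "\<And>m. c (Suc m) = \<rho> m * c m" and lim: "\<rho> \<longlonglongrightarrow> 1"
  shows "conv_radius c \<ge> 1"
proof (rule conv_radius_geI_ex')
  fix r :: real assume r: "0 < r" "ereal r < 1"
  have "eventually (\<lambda>m. norm (\<rho> m) < (1 + r) / (2 * r)) sequentially"
    using r tendsto_norm[OF lim] by (intro order_tendstoD(2)) (auto simp: field_simps)
  then obtain N where N: "\<And>m. m \<ge> N \<Longrightarrow> norm (\<rho> m) < (1 + r) / (2 * r)"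
    unfolding eventually_sequentially by blast
  show "summable (\<lambda>m. c m * of_real r ^ m)"
  proof (rule summable_ratio_test[where c = "(1 + r) / 2" and N = N])
    fix m assume "N \<le> m"
    have "norm (c (Suc m) * of_real r ^ Suc m) = norm (\<rho> m) * r * norm (c m * of_real r ^ m)"
      using r by (simp add: rec norm_mult norm_power mult_ac)
    also have "\<dots> \<le> (1 + r) / (2 * r) * r * norm (c m * of_real r ^ m)"
      using N[OF \<open>N \<le> m\<close>] r by (intro mult_right_mono) auto
    finally show "norm (c (Suc m) * of_real r ^ Suc m) \<le> (1 + r) / 2 * norm (c m * of_real r ^ m)"
      using r by simp
  qed (use r in simp)
qed

lemma mult_suminf_power_eq:
  fixes P t :: "'a::{banach, real_normed_field}"
  assumes "summable (\<lambda>m. c m * t ^ m)" "\<And>m. P * h m = c m"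
  shows "P * (\<Sum>m. h m * t ^ m) = (\<Sum>m. c m * t ^ m)"
proof (cases "P = 0")
  case False
  have "summable (\<lambda>m. h m * t ^ m)"
    using summable_mult[OF assms(1), of "1 / P"] False by (simp add: assms(2)[symmetric] mult_ac)
  then show ?thesis by (simp add: suminf_mult[symmetric] assms(2)[symmetric] mult.assoc)
qed (use assms(2) in simp)

lemma fps_conv_radius_sum:
  "(\<And>j. j \<in> A \<Longrightarrow> r \<le> fps_conv_radius (f j)) \<Longrightarrow> r \<le> fps_conv_radius (\<Sum>j\<in>A. f j)"
proof (induction A rule: infinite_finite_induct)
  case (insert x F)
  then have "r \<le> min (fps_conv_radius (f x)) (fps_conv_radius (\<Sum>j\<in>F. f j))" by simp
  also have "\<dots> \<le> fps_conv_radius (f x + (\<Sum>j\<in>F. f j))" by (rule fps_conv_radius_add)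
  finally show ?case using insert.hyps by simp
qed simp_all

lemma eval_fps_sum:
  fixes f :: "'a \<Rightarrow> 'b::{banach, real_normed_div_algebra} fps"
  assumes "ereal (norm z) < r" "\<And>j. j \<in> A \<Longrightarrow> r \<le> fps_conv_radius (f j)"
  shows "eval_fps (\<Sum>j\<in>A. f j) z = (\<Sum>j\<in>A. eval_fps (f j) z)"
  using assms(2)
proof (induction A rule: infinite_finite_induct)
  case (insert x F)
  have "r \<le> fps_conv_radius (\<Sum>j\<in>F. f j)" "r \<le> fps_conv_radius (f x)"
    using insert.prems by (auto intro: fps_conv_radius_sum)
  then have "ereal (norm z) < fps_conv_radius (\<Sum>j\<in>F. f j)" "ereal (norm z) < fps_conv_radius (f x)"
    using assms(1) by (auto intro: less_le_trans)
  then show ?case using insert by (simp add: eval_fps_add)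
qed simp_all

section \<open>Power series solutions of Fuchsian systems\<close>

text \<open>The operator \<open>c + t d/dt\<close>, i.e. \<open>t\<^sup>1\<^sup>-\<^sup>c d/dt t\<^sup>c\<close>, on power series.\<close>
definition fps_euler :: "'a::comm_ring_1 \<Rightarrow> 'a fps \<Rightarrow> 'a fps" where
  "fps_euler c G = fps_const c * G + fps_X * fps_deriv G"

lemma fps_euler_nth [simp]: "fps_nth (fps_euler c G) m = (c + of_nat m) * fps_nth G m"
  by (cases m) (simp_all add: fps_euler_def algebra_simps)

lemma fps_conv_radius_euler:
  fixes G :: "'a::{banach, real_normed_field} fps"
  shows "fps_conv_radius G \<le> fps_conv_radius (fps_euler c G)"
proof -
  have "fps_conv_radius G \<le> min (fps_conv_radius (fps_const c * G)) (fps_conv_radius (fps_X * fps_deriv G))"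
    using fps_conv_radius_mult[of "fps_const c" G] fps_conv_radius_mult[of fps_X "fps_deriv G"]
      fps_conv_radius_deriv[of G] by auto
  also have "\<dots> \<le> fps_conv_radius (fps_euler c G)"
    unfolding fps_euler_def by (rule fps_conv_radius_add)
  finally show ?thesis .
qed

lemma eval_fps_euler:
  fixes G :: "'a::{banach, real_normed_field} fps"
  assumes "ereal (norm t) < fps_conv_radius G"
  shows "eval_fps (fps_euler c G) t = c * eval_fps G t + t * eval_fps (fps_deriv G) t"
proof -
  have "ereal (norm t) < fps_conv_radius (fps_deriv G)"
    using assms fps_conv_radius_deriv[of G] by (rule less_le_trans)
  moreover have "ereal (norm t) < fps_conv_radius (fps_const c * G)"
    "ereal (norm t) < fps_conv_radius (fps_X * fps_deriv G)"
    using assms calculation fps_conv_radius_mult[of "fps_const c" G]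
      fps_conv_radius_mult[of fps_X "fps_deriv G"] by auto
  ultimately show ?thesis using assms by (simp add: fps_euler_def eval_fps_add eval_fps_mult)
qed

lemma has_field_derivative_powr_mult_eval_fps:
  fixes G :: "complex fps"
  assumes t: "t \<notin> \<real>\<^sub>\<le>\<^sub>0" and conv: "ereal (norm t) < fps_conv_radius G"
  shows "((\<lambda>t. t powr c * eval_fps G t) has_field_derivative
           t powr c * eval_fps (fps_euler c G) t / t) (at t)"
proof -
  have "t \<noteq> 0" using t by auto
  have "((\<lambda>t. t powr c * eval_fps G t) has_field_derivative
          c * t powr (c - 1) * eval_fps G t + t powr c * eval_fps (fps_deriv G) t) (at t)"
    using DERIV_mult[OF has_field_derivative_powr[OF t] has_field_derivative_eval_fps[OF conv]]
    by (simp add: mult_ac)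
  also have "c * t powr (c - 1) * eval_fps G t + t powr c * eval_fps (fps_deriv G) t
      = t powr c * eval_fps (fps_euler c G) t / t"
    using \<open>t \<noteq> 0\<close> by (simp add: eval_fps_euler[OF conv] powr_diff field_simps)
  finally show ?thesis .
qed

lemma one_minus_fps_X_mult_eqI:
  fixes A B C :: "'a::comm_ring_1 fps"
  assumes "fps_nth (A - B) 0 = 0" "\<And>m. fps_nth (A - B) (Suc m) = fps_nth (A - B) m + fps_nth C m"
  shows "(1 - fps_X) * A = (1 - fps_X) * B + fps_X * C"
proof -
  have "A - B = fps_X * (A - B + C)"
  proof (rule fps_ext)
    fix m show "fps_nth (A - B) m = fps_nth (fps_X * (A - B + C)) m"
      using assms by (cases m) (simp_all del: fps_sub_nth)
  qed
  then show ?thesis by (simp add: algebra_simps)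
qed

lemma eval_fps_one_minus_X_identity:
  fixes A B C :: "'a::{banach, real_normed_field} fps"
  assumes "ereal (norm t) < fps_conv_radius A" "ereal (norm t) < fps_conv_radius B"
    "ereal (norm t) < fps_conv_radius C"
    and "(1 - fps_X) * A = (1 - fps_X) * B + fps_X * C"
  shows "(1 - t) * eval_fps A t = (1 - t) * eval_fps B t + t * eval_fps C t"
proof -
  have "fps_conv_radius (1 - fps_X :: 'a fps) = \<infinity>"
    using fps_conv_radius_diff[of "1 :: 'a fps" fps_X] by simp
  then have eval: "eval_fps ((1 - fps_X) * F) t = (1 - t) * eval_fps F t"
      "eval_fps (fps_X * F) t = t * eval_fps F t"
    and radius: "ereal (norm t) < fps_conv_radius ((1 - fps_X) * F)"
      "ereal (norm t) < fps_conv_radius (fps_X * F)"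
    if "ereal (norm t) < fps_conv_radius F" for F
    using that fps_conv_radius_mult[of fps_X F] fps_conv_radius_mult[of "1 - fps_X" F]
    by (auto simp: eval_fps_mult eval_fps_diff intro: less_le_trans)
  show ?thesis
    using arg_cong[OF assms(4), of "\<lambda>F. eval_fps F t"] assms(1-3)
    by (simp add: eval_fps_add eval radius)
qed

lemma powr_eval_fps_solves_fuchsian_system:
  fixes G :: "'a \<Rightarrow> complex fps" and A\<^sub>0 A\<^sub>1 :: "'a \<Rightarrow> 'a \<Rightarrow> complex"
  assumes conv: "\<And>j. j \<in> J \<Longrightarrow> 1 \<le> fps_conv_radius (G j)"
    and "i \<in> J"
    and eq: "(1 - fps_X) * fps_euler c (G i)
           = (1 - fps_X) * (\<Sum>j\<in>J. fps_const (A\<^sub>0 i j) * G j)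
             + fps_X * (\<Sum>j\<in>J. fps_const (A\<^sub>1 i j) * G j)"
    and t: "t \<in> slit_disc"
  shows "((\<lambda>t. t powr c * eval_fps (G i) t) has_field_derivative
           (\<Sum>j\<in>J. (A\<^sub>0 i j / t + A\<^sub>1 i j / (1 - t)) * (t powr c * eval_fps (G j) t))) (at t)"
proof -
  have t1: "norm t < 1" and t_nonpos: "t \<notin> \<real>\<^sub>\<le>\<^sub>0"
    using t by (auto simp: slit_disc_def complex_nonpos_Reals_iff)
  then have "t \<noteq> 0" "1 - t \<noteq> 0" by auto
  have "ereal (norm t) < 1" using t1 by simp
  then have conv_t: "ereal (norm t) < fps_conv_radius (G j)" if "j \<in> J" for j
    using conv[OF that] by (rule less_le_trans)
  have conv_lin_t: "ereal (norm t) < fps_conv_radius (\<Sum>j\<in>J. fps_const (A j) * G j)" for A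
    using \<open>ereal (norm t) < 1\<close>
    by (rule less_le_trans, intro fps_conv_radius_sum order_trans[OF _ fps_conv_radius_mult]) (simp add: conv)
  have eval_lin: "eval_fps (\<Sum>j\<in>J. fps_const (A j) * G j) t = (\<Sum>j\<in>J. A j * eval_fps (G j) t)" for A
    using t1 conv_t
    by (subst eval_fps_sum[where r = 1])
       (auto intro: order_trans[OF _ fps_conv_radius_mult] simp: conv eval_fps_mult)
  define \<theta>G where "\<theta>G = fps_euler c (G i)"
  have conv_\<theta>G: "ereal (norm t) < fps_conv_radius \<theta>G"
    using conv_t[OF \<open>i \<in> J\<close>] fps_conv_radius_euler unfolding \<theta>G_def by (rule less_le_trans)
  define S\<^sub>0 where "S\<^sub>0 = (\<Sum>j\<in>J. A\<^sub>0 i j * eval_fps (G j) t)"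
  define S\<^sub>1 where "S\<^sub>1 = (\<Sum>j\<in>J. A\<^sub>1 i j * eval_fps (G j) t)"
  have "(1 - t) * eval_fps \<theta>G t = (1 - t) * S\<^sub>0 + t * S\<^sub>1"
    using eval_fps_one_minus_X_identity[OF conv_\<theta>G conv_lin_t conv_lin_t eq[folded \<theta>G_def]]
    by (simp add: eval_lin S\<^sub>0_def S\<^sub>1_def)
  then have "eval_fps \<theta>G t = S\<^sub>0 + t * S\<^sub>1 / (1 - t)"
    using \<open>1 - t \<noteq> 0\<close> by (simp add: field_simps)
  then have "eval_fps \<theta>G t / t = S\<^sub>0 / t + S\<^sub>1 / (1 - t)"
    using \<open>t \<noteq> 0\<close> by (simp add: add_divide_distrib)
  also have "\<dots> = (\<Sum>j\<in>J. (A\<^sub>0 i j / t + A\<^sub>1 i j / (1 - t)) * eval_fps (G j) t)"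
    by (simp add: S\<^sub>0_def S\<^sub>1_def sum.distrib sum_divide_distrib ring_distribs)
  finally have "t powr c * (eval_fps \<theta>G t / t)
      = t powr c * (\<Sum>j\<in>J. (A\<^sub>0 i j / t + A\<^sub>1 i j / (1 - t)) * eval_fps (G j) t)"
    by simp
  then have "t powr c * eval_fps \<theta>G t / t
      = (\<Sum>j\<in>J. (A\<^sub>0 i j / t + A\<^sub>1 i j / (1 - t)) * (t powr c * eval_fps (G j) t))"
    by (simp add: sum_distrib_left mult_ac)
  then show ?thesis
    using has_field_derivative_powr_mult_eval_fps[OF t_nonpos conv_t[OF \<open>i \<in> J\<close>], of c]
    by (simp add: \<theta>G_def)
qed

section \<open>Separation of branches around \<open>t = 0\<close>\<close>

lemma exp_2pi_i_eq_imp_diff_in_Ints: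
  assumes "exp (2 * of_real pi * \<i> * a) = exp (2 * of_real pi * \<i> * b)"
  shows "a - b \<in> \<int>"
proof -
  obtain m :: int where "2 * of_real pi * \<i> * a = 2 * of_real pi * \<i> * b + of_int (2 * m) * pi * \<i>"
    using assms unfolding exp_eq by blast
  then have "2 * of_real pi * \<i> * (a - b - of_int m) = 0" by (simp add: algebra_simps)
  then have "a - b = of_int m" by simp
  then show ?thesis by simp
qed

lemma exp_combination_eq_0_imp_eq_0:
  fixes e c :: "'a \<Rightarrow> complex" and g :: "'a \<Rightarrow> complex \<Rightarrow> complex"
  assumes K: "finite K"
    and e: "\<And>k j. k \<in> K \<Longrightarrow> j \<in> K \<Longrightarrow> e k - e j \<in> \<int> \<Longrightarrow> k = j"
    and vanish: "\<And>z. Re z < 0 \<Longrightarrow> (\<Sum>k\<in>K. c k * (exp (e k * z) * g k (exp z))) = 0"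
    and "k \<in> K" "Re z < 0"
  shows "c k * g k (exp z) = 0"
proof -
  \<comment> \<open>Replacing \<open>z\<close> by \<open>z + 2\<pi>i m\<close> multiplies the \<open>k\<close>-th term by \<open>\<mu> k ^ m\<close>.\<close>
  define \<mu> where "\<mu> k = exp (2 * of_real pi * \<i> * e k)" for k
  have "inj_on \<mu> K"
    using e exp_2pi_i_eq_imp_diff_in_Ints by (auto simp: inj_on_def \<mu>_def)
  moreover have "(\<Sum>k\<in>K. \<mu> k ^ m * (c k * (exp (e k * z) * g k (exp z)))) = 0" for m
  proof -
    have "exp (e k * (z + \<i> * (of_int (int m) * (of_real pi * 2)))) = \<mu> k ^ m * exp (e k * z)" for k
      by (simp add: \<mu>_def exp_add[symmetric] exp_of_nat_mult[symmetric] algebra_simps)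
    then show ?thesis
      using vanish[of "z + \<i> * (of_int (int m) * (of_real pi * 2))"] exp_plus_2pin[of z "int m"] \<open>Re z < 0\<close>
      by (simp add: mult_ac)
  qed
  ultimately have "c k * (exp (e k * z) * g k (exp z)) = 0"
    by (rule distinct_power_sums_eq_0_imp_eq_0[OF K _ _ \<open>k \<in> K\<close>])
  then show ?thesis by simp
qed

lemma powr_combination_vanishes_on_half_plane:
  fixes e c :: "'a \<Rightarrow> complex" and g :: "'a \<Rightarrow> complex \<Rightarrow> complex"
  assumes g: "\<And>k. k \<in> K \<Longrightarrow> g k holomorphic_on ball 0 1"
    and vanish: "\<And>t. t \<in> slit_disc \<Longrightarrow> (\<Sum>k\<in>K. c k * (t powr e k * g k t)) = 0"
    and "Re z < 0"
  shows "(\<Sum>k\<in>K. c k * (exp (e k * z) * g k (exp z))) = 0"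
proof -
  define H where "H = {z. Re z < 0}"
  define U where "U = {z. Re z < 0 \<and> - pi < Im z \<and> Im z < pi}"
  have "exp ` H \<subseteq> ball 0 1" by (auto simp: H_def)
  then have "(\<lambda>z. g k (exp z)) holomorphic_on H" if "k \<in> K" for k
    using holomorphic_on_compose[of exp H "g k"] holomorphic_on_subset[OF g[OF that]]
    by (simp add: o_def holomorphic_on_exp)
  then have hol: "(\<lambda>z. \<Sum>k\<in>K. c k * (exp (e k * z) * g k (exp z))) holomorphic_on H"
    by (intro holomorphic_intros)
  have "(\<Sum>k\<in>K. c k * (exp (e k * z) * g k (exp z))) = 0" if "z \<in> U" for z
  proof -
    have "Im (exp z) = 0 \<Longrightarrow> Re (exp z) > 0"
      using that sin_eq_0_pi[of "Im z"] by (auto simp: U_def Im_exp Re_exp)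
    then have "exp z \<in> slit_disc" using that by (auto simp: slit_disc_def U_def)
    moreover have "exp z powr e k = exp (e k * z)" for k
      using that by (simp add: powr_def U_def mult.commute)
    ultimately show ?thesis using vanish[of "exp z"] by simp
  qed
  moreover have "-1 \<in> U" "open U"
    unfolding U_def by (simp, intro open_Collect_conj open_Collect_less continuous_intros)
  ultimately show ?thesis
    using analytic_continuation_open[of U H "\<lambda>z. \<Sum>k\<in>K. c k * (exp (e k * z) * g k (exp z))" "\<lambda>_. 0" z]
      hol \<open>Re z < 0\<close>
    by (fastforce simp: U_def H_def open_halfspace_Re_lt connected_halfspace_Re_lt)
qed

lemma powr_combination_eq_0_imp_eq_0:
  fixes e c :: "'a \<Rightarrow> complex" and g :: "'a \<Rightarrow> complex \<Rightarrow> complex"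
  assumes K: "finite K"
    and e: "\<And>k j. k \<in> K \<Longrightarrow> j \<in> K \<Longrightarrow> e k - e j \<in> \<int> \<Longrightarrow> k = j"
    and g: "\<And>k. k \<in> K \<Longrightarrow> g k holomorphic_on ball 0 1"
    and vanish: "\<And>t. t \<in> slit_disc \<Longrightarrow> (\<Sum>k\<in>K. c k * (t powr e k * g k t)) = 0"
    and "k \<in> K" "t \<in> ball 0 1"
  shows "c k * g k t = 0"
proof (rule analytic_continuation_open[of "ball 0 1 - {0}" "ball 0 1" "\<lambda>t. c k * g k t" "\<lambda>_. 0"])
  have "1/2 \<in> ball 0 1 - {0 :: complex}" by simp
  then show "ball 0 1 - {0 :: complex} \<noteq> {}" by blast
  show "c k * g k t = 0" if "t \<in> ball 0 1 - {0}" for t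
    using exp_combination_eq_0_imp_eq_0[OF K e powr_combination_vanishes_on_half_plane[OF g vanish] \<open>k \<in> K\<close>, of "Ln t"] that
    by simp
qed (use \<open>t \<in> ball 0 1\<close> g[OF \<open>k \<in> K\<close>] in \<open>auto intro: holomorphic_intros\<close>)

section \<open>Cyclic sums of the parameters\<close>

locale hypergeometric_system =
  fixes n :: nat and \<alpha> :: "nat \<Rightarrow> complex"
  assumes alpha_total: "(\<Sum>i\<in>{0..2*n+1}. \<alpha> i) = 1"
    and alpha_sum_even_nonint: "\<And>i j. 1 \<le> i \<Longrightarrow> i \<le> n \<Longrightarrow> 1 \<le> j \<Longrightarrow> j \<le> n - i + 1 \<Longrightarrow>
           alpha_sum n \<alpha> (2 * int i) (2 * int j - 1) \<notin> \<int>"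
begin

abbreviation ax :: "int \<Rightarrow> complex" where
  "ax \<equiv> alpha_ix n \<alpha>"

text \<open>\<open>csum s len\<close> is \<open>\<alpha>\<^sub>s\<^sup>l\<^sup>e\<^sup>n\<^sup>-\<^sup>1\<close>; measuring sums by their length avoids the
  case \<open>l < 0\<close>.\<close>
definition csum :: "int \<Rightarrow> nat \<Rightarrow> complex" where
  "csum s len = (\<Sum>j<len. ax (s + int j))"

lemma csum_add: "csum s (a + b) = csum s a + csum (s + int a) b"
  by (induction b) (auto simp: csum_def add.assoc)

lemma csum_Suc_0 [simp]: "csum s (Suc 0) = ax s"
  by (simp add: csum_def)

lemma csum_2: "csum s 2 = ax s + ax (s + 1)"
  by (simp add: csum_def numeral_2_eq_2)

lemma csum_split: "len = a + b \<Longrightarrow> s' = s + int a \<Longrightarrow> csum s len = csum s a + csum s' b"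
  by (simp add: csum_add)

lemma alpha_ix_periodic: "ax (m + (2 * int n + 2)) = ax m"
  by (simp add: alpha_ix_def)

lemma csum_period: "csum s (2*n+2) = 1"
proof -
  have shift: "csum (s + 1) (2*n+2) = csum s (2*n+2)" for s
    using csum_add[of s 1 "2*n+2"] csum_add[of s "2*n+2" 1] alpha_ix_periodic[of s]
    by (simp add: add.commute)
  have "csum 0 (2*n+2) = (\<Sum>j<2*n+2. \<alpha> j)"
    unfolding csum_def alpha_ix_def
    by (intro sum.cong refl) (simp add: nat_mod_as_int[symmetric] del: of_nat_Suc)
  also have "\<dots> = 1"
    using alpha_total by (simp add: atLeast0AtMost lessThan_Suc_atMost[symmetric])
  finally have "csum 0 (2*n+2) = 1" .
  then show ?thesis
  proof (induction s rule: int_induct[where k = 0])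
    case (step1 i) then show ?case using shift[of i] by simp
  next
    case (step2 i) then show ?case using shift[of "i - 1"] by simp
  qed
qed

lemma alpha_sum_eq_csum: "l \<ge> -1 \<Longrightarrow> alpha_sum n \<alpha> s l = csum s (nat (l + 1))"
  using sum_int_interval_eq_sum_lessThan[where s = s and len = "nat (l + 1)" and f = ax]
  by (auto simp: alpha_sum_def csum_def)

text \<open>\<open>chexp k\<close> is the local exponent \<open>-\<alpha>\<^sub>2\<^sub>k\<^sub>+\<^sub>2\<^sup>2\<^sup>n\<^sup>-\<^sup>2\<^sup>k\<^sup>-\<^sup>1\<close> of \<open>x\<^sup>(\<^sup>k\<^sup>)\<close> at \<open>t = 0\<close>; for
  \<open>1 \<le> l \<le> n\<close>, \<open>apar k l\<close> and \<open>bpar k l\<close> are \<open>\<alpha>\<^sub>2\<^sub>k\<^sub>-\<^sub>2\<^sub>l\<^sub>+\<^sub>3\<^sup>2\<^sup>l\<^sup>-\<^sup>2\<close> and \<open>\<alpha>\<^sub>2\<^sub>k\<^sub>-\<^sub>2\<^sub>l\<^sub>+\<^sub>2\<^sup>2\<^sup>l\<^sup>-\<^sup>1\<close>,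
  and \<open>apar k (n + 1)\<close> is the upper parameter \<open>a\<^sub>0\<close> of \<open>f\<^sup>k\<^sup>,\<^sup>l\<close>.\<close>
definition chexp :: "nat \<Rightarrow> complex" where
  "chexp k = - csum (2 * int k + 2) (2*n - 2*k)"

definition apar :: "nat \<Rightarrow> nat \<Rightarrow> complex" where
  "apar k l = csum (2 * int k - 2 * int l + 3) (2*l - 1)"

definition bpar :: "nat \<Rightarrow> nat \<Rightarrow> complex" where
  "bpar k l = csum (2 * int k - 2 * int l + 2) (2*l)"

lemma alpha_sum_eq_chexp:
  "k \<le> n \<Longrightarrow> alpha_sum n \<alpha> (2 * int k + 2) (2 * int n - 2 * int k - 1) = - chexp k"
  by (subst alpha_sum_eq_csum) (auto simp: chexp_def nat_diff_distrib nat_mult_distrib)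

lemma alpha_sum_eq_apar:
  "1 \<le> l \<Longrightarrow> alpha_sum n \<alpha> (2 * int k - 2 * int l + 3) (2 * int l - 2) = apar k l"
  by (subst alpha_sum_eq_csum) (auto simp: apar_def nat_diff_distrib nat_mult_distrib)

lemma alpha_sum_eq_bpar: "alpha_sum n \<alpha> (2 * int k - 2 * int l + 2) (2 * int l - 1) = bpar k l"
  by (subst alpha_sum_eq_csum) (auto simp: bpar_def nat_mult_distrib)

lemma chexp_n [simp]: "chexp n = 0"
  by (simp add: chexp_def csum_def)

lemma chexp_0: "chexp 0 = ax 0 + ax 1 - 1"
proof -
  have "csum 0 (2*n+2) = csum 0 2 + csum 2 (2*n)" by (rule csum_split) simp_all
  then show ?thesis using csum_period[of 0] by (simp add: chexp_def csum_2 algebra_simps)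
qed

lemma chexp_Suc:
  assumes "i < n"
  shows "chexp (Suc i) = chexp i + ax (2 * int i + 2) + ax (2 * int i + 3)"
proof -
  have "csum (2 * int i + 2) (2*n - 2*i) = csum (2 * int i + 2) 2 + csum (2 * int (Suc i) + 2) (2*n - 2 * Suc i)"
    by (rule csum_split) (use assms in simp_all)
  then show ?thesis by (simp add: chexp_def csum_2 add.assoc)
qed

lemma chexp_diff_le:
  assumes "i \<le> k" "k \<le> n"
  shows "chexp k - chexp i = bpar k (k - i)"
proof -
  have "csum (2 * int i + 2) (2*n - 2*i) = csum (2 * int i + 2) (2 * (k - i)) + csum (2 * int k + 2) (2*n - 2*k)"
    by (rule csum_split) (use assms in \<open>simp_all add: of_nat_diff\<close>)
  moreover have "2 * int k - 2 * int (k - i) + 2 = 2 * int i + 2" using assms by (simp add: of_nat_diff)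
  ultimately show ?thesis by (simp add: chexp_def bpar_def)
qed

lemma chexp_diff_gt:
  assumes "k < i" "i \<le> n"
  shows "chexp k - chexp i = bpar k (n + k + 1 - i) - 1"
proof -
  define l where "l = n + k + 1 - i"
  have "csum (2 * int k + 2) (2*n - 2*k) = csum (2 * int k + 2) (2*i - 2*k) + csum (2 * int i + 2) (2*n - 2*i)"
    by (rule csum_split) (use assms in \<open>simp_all add: of_nat_diff\<close>)
  moreover have "csum (2 * int k - 2 * int l + 2) (2*n+2) = bpar k l + csum (2 * int k + 2) (2*i - 2*k)"
    unfolding bpar_def by (rule csum_split) (use assms in \<open>simp_all add: l_def of_nat_diff\<close>)
  ultimately show ?thesis using csum_period by (simp add: chexp_def l_def algebra_simps)
qed

lemma bpar_eq_apar:
  assumes "1 \<le> l"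
  shows "bpar k l = ax (2 * int k - 2 * int l + 2) + apar k l"
proof -
  have "bpar k l = csum (2 * int k - 2 * int l + 2) 1 + apar k l"
    unfolding bpar_def apar_def by (rule csum_split) (use assms in simp_all)
  then show ?thesis by simp
qed

lemma apar_top: "apar k (n + 1) = 1 - ax (2 * int k + 2)"
proof -
  have "csum (2 * int k - 2 * int n + 1) (2*n+2) = csum (2 * int k - 2 * int n + 1) (2*n+1) + csum (2 * int k + 2) 1"
    by (rule csum_split) simp_all
  moreover have "apar k (n + 1) = csum (2 * int k - 2 * int n + 1) (2*n+1)"
    by (simp add: apar_def add.commute)
  ultimately show ?thesis using csum_period by (simp add: eq_diff_eq)
qed

lemma csum_even_nonint: "1 \<le> i \<Longrightarrow> i \<le> n \<Longrightarrow> 1 \<le> j \<Longrightarrow> j \<le> n - i + 1 \<Longrightarrow> csum (2 * int i) (2*j) \<notin> \<int>"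
  using alpha_sum_even_nonint[of i j] by (simp add: alpha_sum_eq_csum nat_mult_distrib)

lemma bpar_nonint:
  assumes "1 \<le> l" "l \<le> n" "k \<le> n"
  shows "bpar k l \<notin> \<int>"
proof (cases "l \<le> k")
  case True
  then have "2 * int k - 2 * int l + 2 = 2 * int (k - l + 1)" by (simp add: of_nat_diff)
  then show ?thesis using csum_even_nonint[of "k - l + 1" l] assms True by (simp add: bpar_def add.commute)
next
  case False
  have "csum (2 * int k - 2 * int l + 2) (2*n+2) = bpar k l + csum (2 * int (k + 1)) (2 * (n - l + 1))"
    unfolding bpar_def by (rule csum_split) (use assms in simp_all)
  then have "1 = bpar k l + csum (2 * int (k + 1)) (2 * (n - l + 1))"
    using csum_period by simp
  then have "bpar k l = 1 - csum (2 * int (k + 1)) (2 * (n - l + 1))" by (simp add: eq_diff_eq)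
  moreover have "csum (2 * int (k + 1)) (2 * (n - l + 1)) \<notin> \<int>"
    using csum_even_nonint[of "k + 1" "n - l + 1"] assms False by simp
  ultimately show ?thesis using Ints_diff[of 1 "1 - bpar k l"] by force
qed

lemma chexp_diff_nonint:
  assumes "k < j" "j \<le> n"
  shows "chexp k - chexp j \<notin> \<int>"
proof -
  have "csum (2 * int k + 2) (2*n - 2*k) = csum (2 * int k + 2) (2 * (j - k)) + csum (2 * int j + 2) (2*n - 2*j)"
    by (rule csum_split) (use assms in \<open>simp_all add: of_nat_diff\<close>)
  then have "chexp k - chexp j = - csum (2 * int (k + 1)) (2 * (j - k))"
    by (simp add: chexp_def add.commute)
  then show ?thesis using csum_even_nonint[of "k + 1" "j - k"] assms Ints_minus by force
qed

section \<open>The recurrence for the Taylor coefficients\<close>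

text \<open>The \<open>m\<close>-th Taylor coefficient of \<open>f\<^sup>k\<^sup>,\<^sup>l\<close>: the prefactor \<open>\<Prod> a\<^sub>j / b\<^sub>j\<close> is absorbed
  via \<open>a (a + 1)\<^sub>m = (a)\<^sub>m\<^sub>+\<^sub>1\<close>.\<close>
definition coef :: "nat \<Rightarrow> nat \<Rightarrow> nat \<Rightarrow> complex" where
  "coef k l m = pochhammer (apar k (n + 1)) m / fact m
     * (\<Prod>j\<in>{1..l}. pochhammer (apar k j) (m + 1) / pochhammer (bpar k j) (m + 1))
     * (\<Prod>j\<in>{l+1..n}. pochhammer (apar k j) m / pochhammer (bpar k j) m)"

lemma coef_0_0 [simp]: "coef k 0 0 = 1"
  by (simp add: coef_def)

lemma coef_contiguity:
  assumes "1 \<le> l" "l \<le> n" "k \<le> n"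
  shows "(of_nat m + bpar k l) * coef k l m = (of_nat m + apar k l) * coef k (l - 1) m"
proof -
  have "bpar k l \<noteq> - of_nat m"
    using bpar_nonint[OF assms] by (metis Ints_minus Ints_of_nat)
  then have nz: "bpar k l + of_nat m \<noteq> 0" by (simp add: eq_neg_iff_add_eq_0)
  define X where "X = (\<Prod>j\<in>{1..l-1}. pochhammer (apar k j) (m + 1) / pochhammer (bpar k j) (m + 1))"
  define Y where "Y = (\<Prod>j\<in>{l+1..n}. pochhammer (apar k j) m / pochhammer (bpar k j) m)"
  define K where "K = pochhammer (apar k (n + 1)) m / fact m"
  define r where "r = pochhammer (apar k l) m / pochhammer (bpar k l) m"
  have lower: "{1..l} = insert l {1..l-1}" and upper: "{l-1+1..n} = insert l {l+1..n}"
    using assms by auto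
  have "coef k l m = K * X * Y * (pochhammer (apar k l) (m + 1) / pochhammer (bpar k l) (m + 1))"
    unfolding coef_def lower using assms by (simp add: X_def Y_def K_def mult_ac)
  moreover have "coef k (l - 1) m = K * X * Y * r"
    unfolding coef_def upper by (simp add: X_def Y_def K_def r_def mult_ac)
  moreover have "pochhammer (apar k l) (m + 1) / pochhammer (bpar k l) (m + 1)
      = r * ((apar k l + of_nat m) / (bpar k l + of_nat m))"
    by (simp add: r_def pochhammer_Suc)
  ultimately have "(of_nat m + bpar k l) * coef k l m
      = K * X * Y * ((of_nat m + bpar k l) * (r * ((apar k l + of_nat m) / (bpar k l + of_nat m))))"
    by (simp only: mult_ac)
  also have "\<dots> = (of_nat m + apar k l) * coef k (l - 1) m"
    using nz \<open>coef k (l - 1) m = K * X * Y * r\<close> by (simp add: field_simps)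
  finally show ?thesis .
qed

lemma coef_wraparound:
  "(of_nat m + apar k (n + 1)) * coef k n m = of_nat (m + 1) * coef k 0 (m + 1)"
proof -
  define P where "P = (\<Prod>j\<in>{1..n}. pochhammer (apar k j) (m + 1) / pochhammer (bpar k j) (m + 1))"
  have "(fact (Suc m) :: complex) = of_nat (Suc m) * fact m" "(of_nat (Suc m) :: complex) \<noteq> 0"
    by (simp_all del: of_nat_Suc)
  then show ?thesis
    by (simp add: coef_def P_def[symmetric] pochhammer_Suc field_simps del: of_nat_Suc)
qed

text \<open>The Taylor series of the components of \<open>t\<^sup>-\<^sup>c\<^sup>h\<^sup>e\<^sup>x\<^sup>p\<^sup>k x\<^sup>(\<^sup>k\<^sup>)\<close>.\<close>
definition sol_fps :: "nat \<Rightarrow> nat \<Rightarrow> complex fps" where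
  "sol_fps k i = (if i \<le> k then Abs_fps (coef k (k - i)) else fps_X * Abs_fps (coef k (n + k + 1 - i)))"

lemma bpar_wrap_eq_apar:
  assumes "k < i" "i \<le> n"
  shows "bpar k (n + k + 1 - i) = ax (2 * int i + 2) + apar k (n + k + 1 - i)"
proof -
  have "2 * int k - 2 * int (n + k + 1 - i) + 2 = 2 * int i - 2 * int n"
    using assms by (simp add: of_nat_diff)
  moreover have "ax (2 * int i + 2) = ax (2 * int i - 2 * int n)"
    using alpha_ix_periodic[of "2 * int i - 2 * int n"] by (simp add: algebra_simps)
  ultimately show ?thesis using bpar_eq_apar[of "n + k + 1 - i" k] assms by simp
qed

abbreviation sol_coef :: "nat \<Rightarrow> nat \<Rightarrow> nat \<Rightarrow> complex" where
  "sol_coef k i m \<equiv> fps_nth (sol_fps k i) m"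

lemma sol_coef_contiguity:
  assumes "i < n" "k \<le> n"
  shows "(chexp k - chexp i + of_nat m) * sol_coef k i m
       = (chexp k - chexp i - ax (2 * int i + 2) + of_nat m) * sol_coef k (Suc i) m"
proof -
  consider "i < k" | "i = k" | "k < i" by linarith
  then show ?thesis
  proof cases
    case 1
    have "chexp k - chexp i = bpar k (k - i)"
      using chexp_diff_le 1 assms by simp
    moreover have "bpar k (k - i) - ax (2 * int i + 2) = apar k (k - i)"
      using bpar_eq_apar[of "k - i" k] 1 by (simp add: of_nat_diff)
    ultimately show ?thesis
      using coef_contiguity[of "k - i" k m] 1 assms by (simp add: sol_fps_def Suc_diff_Suc algebra_simps)
  next
    case 2
    then show ?thesis
      using coef_wraparound[of "m - 1" k, unfolded apar_top] assms
      by (cases m) (simp_all add: sol_fps_def algebra_simps)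
  next
    case 3
    define l where "l = n + k + 1 - i"
    have l: "1 \<le> l" "l \<le> n" using 3 assms by (auto simp: l_def)
    have chexp_diff: "chexp k - chexp i = bpar k l - 1"
      using chexp_diff_gt 3 assms by (simp add: l_def)
    show ?thesis
    proof (cases m)
      case (Suc m')
      have "(chexp k - chexp i + of_nat m) * sol_coef k i m = (of_nat m' + bpar k l) * coef k l m'"
        using 3 by (simp add: Suc chexp_diff sol_fps_def l_def algebra_simps)
      also have "\<dots> = (of_nat m' + apar k l) * coef k (l - 1) m'"
        using coef_contiguity l assms by simp
      also have "\<dots> = (chexp k - chexp i - ax (2 * int i + 2) + of_nat m) * sol_coef k (Suc i) m"
        using 3 assms bpar_wrap_eq_apar[of k i]
        by (simp add: Suc chexp_diff sol_fps_def l_def algebra_simps)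
      finally show ?thesis .
    qed (use 3 in \<open>simp add: sol_fps_def\<close>)
  qed
qed

lemma sol_coef_wraparound_0: "k \<le> n \<Longrightarrow> chexp k * sol_coef k n 0 = 0"
  by (cases "k = n") (auto simp: sol_fps_def)

lemma sol_coef_wraparound:
  assumes "k \<le> n"
  shows "(chexp k + of_nat (Suc m)) * sol_coef k n (Suc m) = (chexp k + of_nat (Suc m) - ax 0) * sol_coef k 0 m"
proof (cases "k = n")
  case True
  have a: "apar n (Suc n) = 1 - ax 0" using apar_top[of n] alpha_ix_periodic[of 0] by simp
  have "(chexp k + of_nat (Suc m)) * sol_coef k n (Suc m) = of_nat (m + 1) * coef k 0 (m + 1)"
    using True by (simp add: sol_fps_def)
  also have "\<dots> = (of_nat m + apar k (n + 1)) * coef k n m"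
    by (rule coef_wraparound[symmetric])
  also have "\<dots> = (chexp k + of_nat (Suc m) - ax 0) * sol_coef k 0 m"
    using True by (simp add: a sol_fps_def algebra_simps)
  finally show ?thesis .
next
  case False
  then have "k < n" using assms by simp
  have chexp_k: "chexp k = bpar k (k + 1) - 1" using chexp_diff_gt[of k n] \<open>k < n\<close> by simp
  have "(chexp k + of_nat (Suc m)) * sol_coef k n (Suc m) = (of_nat m + bpar k (k + 1)) * coef k (k + 1) m"
    using \<open>k < n\<close> by (simp add: sol_fps_def chexp_k algebra_simps)
  also have "\<dots> = (of_nat m + apar k (k + 1)) * coef k k m"
    using coef_contiguity[of "k + 1" k m] \<open>k < n\<close> by simp
  also have "\<dots> = (chexp k + of_nat (Suc m) - ax 0) * sol_coef k 0 m"
    using bpar_eq_apar[of "k + 1" k] by (simp add: sol_fps_def chexp_k algebra_simps)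
  finally show ?thesis .
qed

lemma sol_coef_step:
  assumes "N < n" "k \<le> n"
  shows "(chexp k + of_nat m - chexp N) * sol_coef k N m
       = (chexp k + of_nat m - chexp (Suc N)) * sol_coef k (Suc N) m
         + ax (2 * int (Suc N) + 1) * sol_coef k (Suc N) m"
  using sol_coef_contiguity[OF assms, of m] chexp_Suc[OF assms(1)] by (simp add: algebra_simps)

lemma sol_coef_telescope:
  assumes "k \<le> n" "i \<le> N" "N \<le> n"
  shows "(chexp k + of_nat m - chexp i) * sol_coef k i m
       = (chexp k + of_nat m - chexp N) * sol_coef k N m + (\<Sum>j\<in>{i<..N}. ax (2 * int j + 1) * sol_coef k j m)"
  using assms(2,3)
proof (induction N rule: dec_induct)
  case (step N)
  have "{i<..Suc N} = insert (Suc N) {i<..N}" using step.hyps by auto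
  then show ?case using step sol_coef_step[of N k m] assms(1) by simp
qed simp

lemma matA0_row_sum:
  assumes "i \<le> n"
  shows "(\<Sum>j\<in>{0..n}. matA0 n \<alpha> i j * x j) = chexp i * x i + (\<Sum>j\<in>{i<..n}. ax (2 * int j + 1) * x j)"
proof (cases "i < n")
  case True
  have "(\<Sum>j\<in>{0..n}. matA0 n \<alpha> i j * x j)
      = (\<Sum>j\<in>{0..n}. if j = i then chexp i * x j else 0)
        + (\<Sum>j\<in>{0..n}. if i < j then ax (2 * int j + 1) * x j else 0)"
    unfolding sum.distrib[symmetric] using True
    by (intro sum.cong refl) (auto simp: matA0_def alpha_sum_eq_chexp)
  also have "\<dots> = chexp i * x i + (\<Sum>j\<in>{i<..n}. ax (2 * int j + 1) * x j)"
    using assms by (simp add: sum.If_cases) (auto intro!: sum.cong)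
  finally show ?thesis .
qed (use assms in \<open>simp add: matA0_def\<close>)

lemma matA1_row_sum:
  "i \<le> n \<Longrightarrow> (\<Sum>j\<in>{0..n}. matA1 n \<alpha> i j * x j) = (\<Sum>j\<in>{0..n}. ax (2 * int j + 1) * x j)"
  by (simp add: matA1_def)

lemma sol_coef_matA0_row:
  assumes "k \<le> n" "i \<le> n"
  shows "(chexp k + of_nat m) * sol_coef k i m - (\<Sum>j\<in>{0..n}. matA0 n \<alpha> i j * sol_coef k j m)
       = (chexp k + of_nat m) * sol_coef k n m"
  using sol_coef_telescope[OF assms(1,2) order_refl, of m] assms(2)
  by (simp add: matA0_row_sum algebra_simps)

lemma sol_coef_matA1_row:
  assumes "k \<le> n" "i \<le> n"
  shows "(\<Sum>j\<in>{0..n}. matA1 n \<alpha> i j * sol_coef k j m)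
       = (chexp k + of_nat m + 1 - ax 0) * sol_coef k 0 m - (chexp k + of_nat m) * sol_coef k n m"
proof -
  have "{0..n} = insert 0 {0<..n}" by auto
  then have "(\<Sum>j\<in>{0..n}. matA1 n \<alpha> i j * sol_coef k j m)
      = ax 1 * sol_coef k 0 m + (\<Sum>j\<in>{0<..n}. ax (2 * int j + 1) * sol_coef k j m)"
    unfolding matA1_row_sum[OF assms(2)] by simp
  then show ?thesis
    using sol_coef_telescope[OF assms(1) _ order_refl, of 0 m] by (simp add: chexp_0 algebra_simps)
qed

lemma sol_fps_row:
  assumes "k \<le> n" "i \<le> n"
  shows "(1 - fps_X) * fps_euler (chexp k) (sol_fps k i)
       = (1 - fps_X) * (\<Sum>j\<in>{0..n}. fps_const (matA0 n \<alpha> i j) * sol_fps k j)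
         + fps_X * (\<Sum>j\<in>{0..n}. fps_const (matA1 n \<alpha> i j) * sol_fps k j)"
proof (rule one_minus_fps_X_mult_eqI)
  have diff_nth: "fps_nth (fps_euler (chexp k) (sol_fps k i) - (\<Sum>j\<in>{0..n}. fps_const (matA0 n \<alpha> i j) * sol_fps k j)) m
      = (chexp k + of_nat m) * sol_coef k n m" for m
    using sol_coef_matA0_row[OF assms] by (simp add: fps_sum_nth)
  show "fps_nth (fps_euler (chexp k) (sol_fps k i) - (\<Sum>j\<in>{0..n}. fps_const (matA0 n \<alpha> i j) * sol_fps k j)) 0 = 0"
    using sol_coef_wraparound_0[OF assms(1)] by (simp only: diff_nth) simp
  show "fps_nth (fps_euler (chexp k) (sol_fps k i) - (\<Sum>j\<in>{0..n}. fps_const (matA0 n \<alpha> i j) * sol_fps k j)) (Suc m)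
      = fps_nth (fps_euler (chexp k) (sol_fps k i) - (\<Sum>j\<in>{0..n}. fps_const (matA0 n \<alpha> i j) * sol_fps k j)) m
        + fps_nth (\<Sum>j\<in>{0..n}. fps_const (matA1 n \<alpha> i j) * sol_fps k j) m" for m
    using sol_coef_wraparound[OF assms(1), of m] sol_coef_matA1_row[OF assms, of m]
    by (simp only: diff_nth fps_sum_nth fps_mult_left_const_nth) (simp add: algebra_simps)
qed

section \<open>Convergence and the solutions \<open>x\<^sup>(\<^sup>k\<^sup>)\<close>\<close>

lemma coef_Suc:
  "coef k l (Suc m) = (apar k (n + 1) + of_nat m) / (1 + of_nat m)
     * (\<Prod>j\<in>{1..l}. (apar k j + 1 + of_nat m) / (bpar k j + 1 + of_nat m))
     * (\<Prod>j\<in>{l+1..n}. (apar k j + of_nat m) / (bpar k j + of_nat m)) * coef k l m"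
proof -
  have ratio: "pochhammer a (Suc m) / pochhammer b (Suc m) = pochhammer a m / pochhammer b m * ((a + of_nat m) / (b + of_nat m))"
    for a b :: complex and m by (simp add: pochhammer_Suc)
  have "pochhammer a (Suc m) / fact (Suc m) = pochhammer a m / fact m * ((a + of_nat m) / (1 + of_nat m))"
    for a :: complex by (simp add: pochhammer_Suc add.commute)
  moreover have "(\<Prod>j\<in>{1..l}. pochhammer (apar k j) (Suc m + 1) / pochhammer (bpar k j) (Suc m + 1))
      = (\<Prod>j\<in>{1..l}. pochhammer (apar k j) (m + 1) / pochhammer (bpar k j) (m + 1))
        * (\<Prod>j\<in>{1..l}. (apar k j + 1 + of_nat m) / (bpar k j + 1 + of_nat m))"
    unfolding prod.distrib[symmetric]
    by (intro prod.cong refl) (simp only: Suc_eq_plus1[symmetric] ratio, simp add: add_ac)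
  moreover have "(\<Prod>j\<in>{l+1..n}. pochhammer (apar k j) (Suc m) / pochhammer (bpar k j) (Suc m))
      = (\<Prod>j\<in>{l+1..n}. pochhammer (apar k j) m / pochhammer (bpar k j) m)
        * (\<Prod>j\<in>{l+1..n}. (apar k j + of_nat m) / (bpar k j + of_nat m))"
    unfolding prod.distrib[symmetric] by (intro prod.cong refl) (simp only: ratio)
  ultimately show ?thesis
    by (simp only: coef_def) (simp add: mult_ac)
qed

lemma coef_conv_radius: "1 \<le> fps_conv_radius (Abs_fps (coef k l))"
proof -
  define \<rho> where "\<rho> m = (apar k (n + 1) + of_nat m) / (1 + of_nat m)
     * (\<Prod>j\<in>{1..l}. (apar k j + 1 + of_nat m) / (bpar k j + 1 + of_nat m))
     * (\<Prod>j\<in>{l+1..n}. (apar k j + of_nat m) / (bpar k j + of_nat m))" for m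
  have "\<rho> \<longlonglongrightarrow> 1 * (\<Prod>j\<in>{1..l}. 1) * (\<Prod>j\<in>{l+1..n}. 1)"
    unfolding \<rho>_def by (intro tendsto_mult tendsto_prod tendsto_add_of_nat_ratio)
  then show ?thesis
    unfolding fps_conv_radius_def fps_nth_Abs_fps
    by (intro conv_radius_ge_1_if_ratio_tendsto_1[of "coef k l" \<rho>]) (simp_all add: coef_Suc \<rho>_def)
qed

lemma sol_fps_conv_radius: "1 \<le> fps_conv_radius (sol_fps k i)"
  using coef_conv_radius fps_conv_radius_mult[of fps_X]
  by (auto simp: sol_fps_def intro: order_trans)

lemma par_a_eq: "par_a n \<alpha> k l i = (if i = 0 then apar k (n + 1) else if i \<le> l then 1 + apar k i else apar k i)"
proof -
  have "alpha_sum n \<alpha> (2 * int k - 2 * int n + 1) (2 * int n) = apar k (n + 1)"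
    using alpha_sum_eq_apar[of "n + 1" k] by (simp add: algebra_simps)
  then show ?thesis by (simp add: par_a_def alpha_sum_eq_apar)
qed

lemma par_b_eq: "par_b n \<alpha> k l i = (if i \<le> l then 1 + bpar k i else bpar k i)"
  by (simp add: par_b_def alpha_sum_eq_bpar)

lemma prefactor_mult_hypF_coef:
  assumes "l \<le> n"
  shows "(\<Prod>j\<in>{1..l}. apar k j / bpar k j) * ((\<Prod>j\<in>{0..n}. pochhammer (par_a n \<alpha> k l j) m)
           / (fact m * (\<Prod>j\<in>{1..n}. pochhammer (par_b n \<alpha> k l j) m))) = coef k l m"
proof -
  have split: "{1..n} = {1..l} \<union> {l+1..n}" "{1..l} \<inter> {l+1..n} = {}" "{0..n} = insert 0 {1..n}"
    using assms by auto
  have upper: "(\<Prod>j\<in>{0..n}. pochhammer (par_a n \<alpha> k l j) m) = pochhammer (apar k (n + 1)) m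
      * ((\<Prod>j\<in>{1..l}. pochhammer (apar k j + 1) m) * (\<Prod>j\<in>{l+1..n}. pochhammer (apar k j) m))"
    unfolding split(3) split(1) using split(2)
    by (subst prod.insert) (auto simp: prod.union_disjoint par_a_eq add.commute intro!: arg_cong2[where f = "(*)"] prod.cong)
  have lower: "(\<Prod>j\<in>{1..n}. pochhammer (par_b n \<alpha> k l j) m)
      = (\<Prod>j\<in>{1..l}. pochhammer (bpar k j + 1) m) * (\<Prod>j\<in>{l+1..n}. pochhammer (bpar k j) m)"
    unfolding split(1) using split(2)
    by (auto simp: prod.union_disjoint par_b_eq add.commute intro!: arg_cong2[where f = "(*)"] prod.cong)
  have shifted: "(\<Prod>j\<in>{1..l}. pochhammer (apar k j) (m + 1) / pochhammer (bpar k j) (m + 1))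
      = (\<Prod>j\<in>{1..l}. apar k j) * (\<Prod>j\<in>{1..l}. pochhammer (apar k j + 1) m)
        / ((\<Prod>j\<in>{1..l}. bpar k j) * (\<Prod>j\<in>{1..l}. pochhammer (bpar k j + 1) m))"
    by (simp add: pochhammer_rec prod.distrib prod_dividef)
  have unshifted: "(\<Prod>j\<in>{l+1..n}. pochhammer (apar k j) m / pochhammer (bpar k j) m)
      = (\<Prod>j\<in>{l+1..n}. pochhammer (apar k j) m) / (\<Prod>j\<in>{l+1..n}. pochhammer (bpar k j) m)"
    by (simp add: prod_dividef)
  have "(\<Prod>j\<in>{1..l}. apar k j / bpar k j) = (\<Prod>j\<in>{1..l}. apar k j) / (\<Prod>j\<in>{1..l}. bpar k j)"
    by (simp add: prod_dividef)
  then show ?thesis unfolding upper lower coef_def shifted unshifted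
    by (simp add: divide_inverse inverse_mult_distrib mult_ac)
qed

lemma fkl_eq_eval_fps:
  assumes "l \<le> n" "norm t < 1"
  shows "fkl n \<alpha> k l t = eval_fps (Abs_fps (coef k l)) t"
proof -
  have "ereal (norm t) < fps_conv_radius (Abs_fps (coef k l))"
    using coef_conv_radius[of k l] assms(2) by (simp add: less_le_trans[where y = 1])
  then have summable: "summable (\<lambda>m. coef k l m * t ^ m)"
    using summable_fps[of t "Abs_fps (coef k l)"] by simp
  have "fkl n \<alpha> k l t = (\<Prod>j\<in>{1..l}. apar k j / bpar k j)
      * (\<Sum>m. (\<Prod>j\<in>{0..n}. pochhammer (par_a n \<alpha> k l j) m)
                / (fact m * (\<Prod>j\<in>{1..n}. pochhammer (par_b n \<alpha> k l j) m)) * t ^ m)"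
    unfolding fkl_def hypF_def by (simp add: alpha_sum_eq_apar alpha_sum_eq_bpar)
  also have "\<dots> = eval_fps (Abs_fps (coef k l)) t"
    unfolding eval_fps_def fps_nth_Abs_fps
    by (rule mult_suminf_power_eq[OF summable prefactor_mult_hypF_coef[OF assms(1)]])
  finally show ?thesis .
qed

lemma solx_eq_powr_eval_fps:
  assumes "k \<le> n" "i \<le> n" "norm t < 1"
  shows "solx n \<alpha> k i t = t powr chexp k * eval_fps (sol_fps k i) t"
proof (cases "i \<le> k")
  case True
  then show ?thesis using assms fkl_eq_eval_fps[of "k - i" t k]
    by (simp add: solx_def alpha_sum_eq_chexp sol_fps_def)
next
  case False
  have "ereal (norm t) < fps_conv_radius (Abs_fps (coef k (n + k + 1 - i)))"
    using coef_conv_radius assms(3) by (simp add: less_le_trans[where y = 1])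
  then have "eval_fps (fps_X * Abs_fps (coef k (n + k + 1 - i))) t = t * eval_fps (Abs_fps (coef k (n + k + 1 - i))) t"
    by (subst eval_fps_mult) auto
  then show ?thesis using assms False fkl_eq_eval_fps[of "n + k + 1 - i" t k]
    by (simp add: solx_def alpha_sum_eq_chexp sol_fps_def)
qed

lemma solx_has_field_derivative:
  assumes "k \<le> n" "i \<le> n" "t \<in> slit_disc"
  shows "((solx n \<alpha> k i) has_field_derivative
           (\<Sum>j\<in>{0..n}. (matA0 n \<alpha> i j / t + matA1 n \<alpha> i j / (1 - t)) * solx n \<alpha> k j t)) (at t)"
proof -
  have "t \<in> ball 0 1" using assms(3) by (simp add: slit_disc_def)
  have "((\<lambda>t. t powr chexp k * eval_fps (sol_fps k i) t) has_field_derivative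
          (\<Sum>j\<in>{0..n}. (matA0 n \<alpha> i j / t + matA1 n \<alpha> i j / (1 - t))
                       * (t powr chexp k * eval_fps (sol_fps k j) t))) (at t)"
    using sol_fps_row[OF assms(1,2)] assms(2,3)
    by (intro powr_eval_fps_solves_fuchsian_system sol_fps_conv_radius) simp_all
  also have "(\<Sum>j\<in>{0..n}. (matA0 n \<alpha> i j / t + matA1 n \<alpha> i j / (1 - t)) * (t powr chexp k * eval_fps (sol_fps k j) t))
      = (\<Sum>j\<in>{0..n}. (matA0 n \<alpha> i j / t + matA1 n \<alpha> i j / (1 - t)) * solx n \<alpha> k j t)"
    using \<open>t \<in> ball 0 1\<close> assms(1) by (intro sum.cong) (simp_all add: solx_eq_powr_eval_fps)
  finally show ?thesis
    by (rule has_field_derivative_transform_within_open[OF _ open_ball \<open>t \<in> ball 0 1\<close>])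
       (use assms(1,2) in \<open>simp add: solx_eq_powr_eval_fps\<close>)
qed

lemma solx_linearly_independent:
  assumes vanish: "\<forall>t\<in>slit_disc. \<forall>i\<le>n. (\<Sum>k\<in>{0..n}. c k * solx n \<alpha> k i t) = 0" and "k \<le> n"
  shows "c k = 0"
proof -
  have "c k * eval_fps (sol_fps k k) 0 = 0"
  proof (rule powr_combination_eq_0_imp_eq_0[where K = "{0..n}" and e = chexp and g = "\<lambda>j. eval_fps (sol_fps j k)"])
    show "j = j'" if "j \<in> {0..n}" "j' \<in> {0..n}" "chexp j - chexp j' \<in> \<int>" for j j'
      using chexp_diff_nonint[of j j'] chexp_diff_nonint[of j' j] that
      by (metis Ints_minus atLeastAtMost_iff linorder_neqE_nat minus_diff_eq)
    show "eval_fps (sol_fps j k) holomorphic_on ball 0 1" for j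
      by (intro holomorphic_on_eval_fps) (auto simp: subset_eq intro!: less_le_trans[OF _ sol_fps_conv_radius])
    show "(\<Sum>j\<in>{0..n}. c j * (t powr chexp j * eval_fps (sol_fps j k) t)) = 0" if "t \<in> slit_disc" for t
      using vanish \<open>k \<le> n\<close> that by (simp add: slit_disc_def solx_eq_powr_eval_fps)
  qed (use \<open>k \<le> n\<close> in simp_all)
  then show ?thesis by (simp add: eval_fps_at_0 sol_fps_def)
qed

end

theorem theorem3p1:
  fixes n :: nat and \<alpha> :: "nat \<Rightarrow> complex"
  assumes "n \<ge> 1"
    and "(\<Sum>i\<in>{0..2*n+1}. \<alpha> i) = 1"
    and "\<And>i j. 1 \<le> i \<Longrightarrow> i \<le> n \<Longrightarrow> 1 \<le> j \<Longrightarrow> j \<le> n - i + 1 \<Longrightarrow>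
           alpha_sum n \<alpha> (2 * int i) (2 * int j - 1) \<notin> \<int>"
    and "(\<Sum>i\<in>{0..n}. \<alpha> (2 * i + 1)) \<notin> \<int>"
    and "\<And>i j. 1 \<le> i \<Longrightarrow> i \<le> n \<Longrightarrow> 1 \<le> j \<Longrightarrow> j \<le> n - i + 1 \<Longrightarrow>
           alpha_sum n \<alpha> (2 * int i - 1) (2 * int j - 1) \<notin> \<int>"
  shows "(\<forall>k\<le>n. \<forall>t\<in>slit_disc. \<forall>i\<le>n.
            ((solx n \<alpha> k i) has_field_derivative
               (\<Sum>j\<in>{0..n}. (matA0 n \<alpha> i j / t + matA1 n \<alpha> i j / (1 - t)) * solx n \<alpha> k j t))
            (at t))
       \<and> (\<forall>c :: nat \<Rightarrow> complex.
            (\<forall>t\<in>slit_disc. \<forall>i\<le>n. (\<Sum>k\<in>{0..n}. c k * solx n \<alpha> k i t) = 0)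
            \<longrightarrow> (\<forall>k\<le>n. c k = 0))"
proof -
  \<comment> \<open>Only the non-integrality of the sums starting at even indices is needed: it keeps the
    lower parameters off the non-positive integers and separates the local exponents.\<close>
  interpret hypergeometric_system n \<alpha>
    using assms(2,3) by unfold_locales
  show ?thesis
    using solx_has_field_derivative solx_linearly_independent by blast
qed

end
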